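(* Let $A\in\mathbb{R}^{m\times n}$ be semimonotone ($A^{\dagger}\geq 0$) and let $(U_k,V_k,E_k)_{k=1}^{p}$ be a proper weak regular multisplitting of $A$. Let $H=\sum_{k=1}^{p}E_kU_k^{\dagger}V_k$ and let $A=B-C$ be the splitting induced by $H$, where $B=A(I-H)^{-1}$ and $C=B-A$. If $A\geq 0$ and $R(E_k)\subseteq R(A^{T})$ for each $k=1,\ldots,p$, then $A=B-C$ is a proper regular splitting.
   Context: $A^{\dagger}$ denotes the Moore–Penrose inverse, $R(\cdot)$, $N(\cdot)$ range and null space; inequalities are entrywise. A splitting $A=U-V$ is proper if $R(U)=R(A)$ and $N(U)=N(A)$; a proper splitting is proper weak regular if $U^{\dagger}\geq 0$ and $U^{\dagger}V\geq 0$, and proper regular if $U^{\dagger}\geq 0$ and $V\geq 0$. A proper weak regular multisplitting of $A$ is a triplet $(U_k,V_k,E_k)_{k=1}^{p}$ where each $A=U_k-V_k$ is a proper weak regular splitting and each $E_k\geq 0$ is an $n\times n$ diagonal matrix with $\sum_{k=1}^{p}E_k=I_n$. Under these hypotheses $I-H$ is invertible and $B^{\dagger}C=H$. *)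

theory Defs
  imports "HOL-Analysis.Analysis"
begin

text \<open>Matrices A of size m x n are represented as real^'n^'m (rows indexed by 'm).\<close>

definition mp_inverse :: "real^'n^'m \<Rightarrow> real^'m^'n" where
  "mp_inverse A = (THE X. A ** X ** A = A \<and> X ** A ** X = X \<and>
                          transpose (A ** X) = A ** X \<and> transpose (X ** A) = X ** A)"

definition nonneg_mat :: "real^'n^'m \<Rightarrow> bool" where
  "nonneg_mat A \<longleftrightarrow> (\<forall>i j. 0 \<le> A $ i $ j)"

definition col_range :: "real^'n^'m \<Rightarrow> (real^'m) set" where
  "col_range A = range (\<lambda>x. A *v x)"

definition null_space :: "real^'n^'m \<Rightarrow> (real^'n) set" where
  "null_space A = {x. A *v x = 0}"

definition proper_splitting :: "real^'n^'m \<Rightarrow> real^'n^'m \<Rightarrow> real^'n^'m \<Rightarrow> bool" where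
  "proper_splitting A U V \<longleftrightarrow> A = U - V \<and> col_range U = col_range A \<and> null_space U = null_space A"

definition proper_weak_regular_splitting :: "real^'n^'m \<Rightarrow> real^'n^'m \<Rightarrow> real^'n^'m \<Rightarrow> bool" where
  "proper_weak_regular_splitting A U V \<longleftrightarrow> proper_splitting A U V \<and>
     nonneg_mat (mp_inverse U) \<and> nonneg_mat (mp_inverse U ** V)"

definition proper_regular_splitting :: "real^'n^'m \<Rightarrow> real^'n^'m \<Rightarrow> real^'n^'m \<Rightarrow> bool" where
  "proper_regular_splitting A U V \<longleftrightarrow> proper_splitting A U V \<and>
     nonneg_mat (mp_inverse U) \<and> nonneg_mat V"

definition diagonal_mat :: "real^'n^'n \<Rightarrow> bool" where
  "diagonal_mat E \<longleftrightarrow> (\<forall>i j. i \<noteq> j \<longrightarrow> E $ i $ j = 0)"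

definition proper_weak_regular_multisplitting ::
  "real^'n^'m \<Rightarrow> nat \<Rightarrow> (nat \<Rightarrow> real^'n^'m) \<Rightarrow> (nat \<Rightarrow> real^'n^'m) \<Rightarrow> (nat \<Rightarrow> real^'n^'n) \<Rightarrow> bool" where
  "proper_weak_regular_multisplitting A p U V E \<longleftrightarrow>
     (\<forall>k<p. proper_weak_regular_splitting A (U k) (V k) \<and> nonneg_mat (E k) \<and> diagonal_mat (E k))
     \<and> (\<Sum>k<p. E k) = mat 1"

definition multisplitting_H ::
  "nat \<Rightarrow> (nat \<Rightarrow> real^'n^'m) \<Rightarrow> (nat \<Rightarrow> real^'n^'m) \<Rightarrow> (nat \<Rightarrow> real^'n^'n) \<Rightarrow> real^'n^'n" where
  "multisplitting_H p U V E = (\<Sum>k<p. E k ** mp_inverse (U k) ** V k)"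

end

theory Submission
  imports Defs
begin

text \<open>Let \<open>P = A\<^sup>\<dagger>A\<close> and \<open>M = \<Sum>\<^sub>k E\<^sub>k U\<^sub>k\<^sup>\<dagger>\<close>. Properness gives
  \<open>U\<^sub>k\<^sup>\<dagger>U\<^sub>k = P\<close> and \<open>U\<^sub>kU\<^sub>k\<^sup>\<dagger> = AA\<^sup>\<dagger>\<close>, hence \<open>H = P - MA\<close> and \<open>(I - H)A\<^sup>\<dagger> = M\<close>;
  the range condition on the \<open>E\<^sub>k\<close> gives \<open>PH = H\<close>, and \<open>HP = H\<close> always holds.
  If \<open>0 \<le> z \<le> zH\<close> for a row vector \<open>z\<close>, then \<open>zM = z(I - H)A\<^sup>\<dagger> \<le> 0\<close> by semimonotonicity,
  while every summand \<open>zE\<^sub>kU\<^sub>k\<^sup>\<dagger>\<close> is nonnegative; so all of them vanish, and since \<open>E\<^sub>kz\<close>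
  lies in \<open>R(A\<^sup>T)\<close> this forces \<open>E\<^sub>kz = 0\<close>, i.e. \<open>z = 0\<close>. For the nonnegative matrix \<open>H\<close>
  the absence of such subinvariant vectors makes \<open>I - H\<close> invertible with a nonnegative inverse.
  Therefore \<open>B = A(I - H)\<^sup>-\<^sup>1 \<ge> 0\<close> and \<open>C = BH \<ge> 0\<close>; moreover \<open>B\<close> has the range and null
  space of \<open>A\<close>, and \<open>B\<^sup>\<dagger> = (I - H)A\<^sup>\<dagger> = M \<ge> 0\<close>.\<close>

lemma matrix_add_rdistrib: "((A::'a::semiring_1^'n^'m) + B) ** C = A ** C + B ** C"
  by (vector matrix_matrix_mult_def sum.distrib[symmetric] field_simps)

lemma matrix_diff_ldistrib: "(A::'a::ring_1^'n^'m) ** (B - C) = A ** B - A ** C"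
  by (vector matrix_matrix_mult_def sum_subtractf[symmetric] field_simps)

lemma matrix_diff_rdistrib: "((A::'a::ring_1^'n^'m) - B) ** C = A ** C - B ** C"
  by (vector matrix_matrix_mult_def sum_subtractf[symmetric] field_simps)

lemma sum_matrix_mult: "(\<Sum>k\<in>K. f k) ** (C::'a::semiring_1^'p^'n) = (\<Sum>k\<in>K. f k ** C)"
  by (induction K rule: infinite_finite_induct) (auto simp: matrix_add_rdistrib)

lemma matrix_mult_sum: "(C::'a::semiring_1^'n^'m) ** (\<Sum>k\<in>K. f k) = (\<Sum>k\<in>K. C ** f k)"
  by (induction K rule: infinite_finite_induct) (auto simp: matrix_add_ldistrib)

lemma sum_matrix_vector_mult: "(\<Sum>k\<in>K. f k) *v x = (\<Sum>k\<in>K. f k *v x)"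
  by (induction K rule: infinite_finite_induct) (auto simp: matrix_vector_mult_add_rdistrib)

lemma vector_matrix_mult_sum: "z v* (\<Sum>k\<in>K. f k) = (\<Sum>k\<in>K. z v* f k)"
  by (induction K rule: infinite_finite_induct) (auto simp: vector_matrix_mult_add_rdistrib)

lemma subspace_col_range: "subspace (col_range M)"
  unfolding col_range_def by (rule linear_subspace_image[OF matrix_vector_mul_linear subspace_UNIV])

lemma col_range_mult_subset: "col_range (M ** N) \<subseteq> col_range M"
  unfolding col_range_def by (auto simp flip: matrix_vector_mul_assoc)

lemma inner_inverse_mult_eq_if_col_range_subset:
  assumes "A ** G ** A = A" and "col_range M \<subseteq> col_range A"
  shows "A ** G ** M = M"
proof (subst matrix_eq, intro allI)
  fix x
  obtain y where "M *v x = A *v y" using assms(2) unfolding col_range_def by auto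
  then show "A ** G ** M *v x = M *v x" using assms(1) by (metis matrix_vector_mul_assoc)
qed

lemma idempotent_mult_eq_if_col_range_subset:
  assumes "P ** P = P" and "col_range M \<subseteq> col_range P"
  shows "P ** M = M"
  using inner_inverse_mult_eq_if_col_range_subset[of P "mat 1" M] assms by simp

lemma symmetric_if_inner_symmetric:
  fixes M :: "real^'n^'n"
  assumes "\<And>x y. (M *v x) \<bullet> y = x \<bullet> (M *v y)"
  shows "transpose M = M"
proof -
  have "transpose M *v y = M *v y" for y
  proof -
    have "x \<bullet> (transpose M *v y - M *v y) = 0" for x
      using assms[of x y] by (simp add: dot_lmul_matrix[symmetric] inner_diff_right inner_commute)
    from this[of "transpose M *v y - M *v y"] show ?thesis by simp
  qed
  then show ?thesis by (simp add: matrix_eq)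
qed

lemma orthogonal_projection_unique:
  fixes S :: "'a::euclidean_space set"
  assumes "subspace S" "a \<in> S" "\<forall>w\<in>S. (y - a) \<bullet> w = 0" "b \<in> S" "\<forall>w\<in>S. (y - b) \<bullet> w = 0"
  shows "a = b"
proof -
  have "b - a \<in> S" using assms by (simp add: subspace_diff)
  then have "(y - a) \<bullet> (b - a) - (y - b) \<bullet> (b - a) = 0" using assms by simp
  then have "(b - a) \<bullet> (b - a) = 0" by (simp add: inner_diff_left inner_diff_right inner_commute)
  then show ?thesis by simp
qed

lemma orthogonal_projection_exists:
  fixes S :: "'a::euclidean_space set"
  assumes S: "subspace S"
  obtains p where "linear p" "\<And>y. p y \<in> S" "\<And>y w. w \<in> S \<Longrightarrow> (y - p y) \<bullet> w = 0"
proof -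
  let ?proj = "\<lambda>y a. a \<in> S \<and> (\<forall>w\<in>S. (y - a) \<bullet> w = 0)"
  have "\<exists>a. ?proj y a" for y
  proof -
    obtain a z where "a \<in> span S" "\<And>w. w \<in> span S \<Longrightarrow> orthogonal z w" "y = a + z"
      using orthogonal_subspace_decomp_exists by metis
    moreover have "span S = S" using S by (simp add: span_eq_iff)
    ultimately show ?thesis by (auto simp: orthogonal_def)
  qed
  then obtain p where p: "?proj y (p y)" for y by metis
  have eqI: "p y = a" if "?proj y a" for y a
    using orthogonal_projection_unique[OF S] p that by blast
  have "linear p"
  proof
    fix x y
    have d: "x + y - (p x + p y) = (x - p x) + (y - p y)" by simp
    show "p (x + y) = p x + p y"
      using p[of x] p[of y] S by (intro eqI) (simp add: d subspace_add inner_add_left)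
  next
    fix c x
    have d: "c *\<^sub>R x - c *\<^sub>R p x = c *\<^sub>R (x - p x)" by (simp add: scaleR_right_diff_distrib)
    show "p (c *\<^sub>R x) = c *\<^sub>R p x"
      using p[of x] S by (intro eqI) (simp add: d subspace_scale)
  qed
  then show thesis using that p by blast
qed

lemma orthogonal_projector_exists:
  fixes S :: "(real^'n) set"
  assumes S: "subspace S"
  obtains P :: "real^'n^'n" where "P ** P = P" "transpose P = P" "col_range P = S"
proof -
  obtain p where lin: "linear p" and pS: "\<And>y. p y \<in> S"
    and orth: "\<And>y w. w \<in> S \<Longrightarrow> (y - p y) \<bullet> w = 0"
    using orthogonal_projection_exists[OF S] by blast
  define P where "P = matrix p"
  have Pv: "P *v y = p y" for y unfolding P_def using lin by simp
  have fix_S: "p y = y" if "y \<in> S" for y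
    using orthogonal_projection_unique[OF S pS[of y] _ that, of y] orth that by auto
  have "P ** P = P" by (simp add: matrix_eq Pv fix_S pS flip: matrix_vector_mul_assoc)
  moreover have "transpose P = P"
  proof (rule symmetric_if_inner_symmetric)
    fix x y
    have "(x - p x) \<bullet> p y = 0" "(y - p y) \<bullet> p x = 0" using orth pS by auto
    then show "(P *v x) \<bullet> y = x \<bullet> (P *v y)" by (simp add: Pv inner_diff_left inner_diff_right inner_commute)
  qed
  moreover have "col_range P = S"
    unfolding col_range_def Pv using pS fix_S by (auto intro: image_eqI[of _ p, OF fix_S[symmetric]])
  ultimately show thesis using that by blast
qed

definition is_mp_inverse :: "real^'n^'m \<Rightarrow> real^'m^'n \<Rightarrow> bool" where
  "is_mp_inverse A X \<longleftrightarrow> A ** X ** A = A \<and> X ** A ** X = X \<and>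
     transpose (A ** X) = A ** X \<and> transpose (X ** A) = X ** A"

lemma is_mp_inverse_unique:
  assumes "is_mp_inverse A X" and "is_mp_inverse A Y"
  shows "X = Y"
proof -
  have X: "A ** X ** A = A" "X ** A ** X = X" "transpose (A ** X) = A ** X" "transpose (X ** A) = X ** A"
    and Y: "A ** Y ** A = A" "Y ** A ** Y = Y" "transpose (A ** Y) = A ** Y" "transpose (Y ** A) = Y ** A"
    using assms unfolding is_mp_inverse_def by auto
  have "X = X ** transpose (A ** X)" using X by (simp add: matrix_mul_assoc)
  also have "\<dots> = X ** transpose ((A ** Y) ** (A ** X))" using Y by (simp add: matrix_mul_assoc)
  also have "\<dots> = X ** (transpose (A ** X) ** transpose (A ** Y))"
    by (simp only: matrix_transpose_mul[of "A ** Y" "A ** X"])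
  also have "\<dots> = (X ** A ** X) ** A ** Y" using X Y by (simp add: matrix_mul_assoc)
  also have "\<dots> = X ** A ** Y" using X by simp
  finally have XY: "X = X ** A ** Y" .
  have "Y = transpose (Y ** A) ** Y" using Y by simp
  also have "\<dots> = transpose ((Y ** A) ** (X ** A)) ** Y" using X by (metis matrix_mul_assoc)
  also have "\<dots> = (transpose (X ** A) ** transpose (Y ** A)) ** Y"
    by (simp only: matrix_transpose_mul[of "Y ** A" "X ** A"])
  also have "\<dots> = X ** A ** (Y ** A ** Y)" using X(4) Y(4) by (simp add: matrix_mul_assoc)
  also have "\<dots> = X ** A ** Y" using Y by simp
  finally show ?thesis using XY by simp
qed

lemma is_mp_inverse_exists: "\<exists>X. is_mp_inverse (A::real^'n^'m) X"
proof -
  obtain Q where QQ: "Q ** Q = Q" and Qsym: "transpose Q = Q" and Q: "col_range Q = col_range (transpose A)"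
    using orthogonal_projector_exists[OF subspace_col_range] by blast
  obtain R where RR: "R ** R = R" and Rsym: "transpose R = R" and R: "col_range R = col_range A"
    using orthogonal_projector_exists[OF subspace_col_range] by blast
  have "Q ** transpose A = transpose A"
    using idempotent_mult_eq_if_col_range_subset[OF QQ, of "transpose A"] Q by simp
  then have AQ: "A ** Q = A" by (metis Qsym matrix_transpose_mul transpose_transpose)
  have RA: "R ** A = A" using idempotent_mult_eq_if_col_range_subset[OF RR, of A] R by simp
  have "inj_on ((*v) A) (col_range (transpose A))"
  proof (rule inj_onI)
    fix x y assume xy: "x \<in> col_range (transpose A)" "y \<in> col_range (transpose A)" "A *v x = A *v y"
    then have "x - y \<in> col_range (transpose A)" using subspace_col_range subspace_diff by blast
    then obtain u where "x - y = transpose A *v u" unfolding col_range_def by auto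
    then have "(x - y) \<bullet> (x - y) = (A *v (x - y)) \<bullet> u"
      by (simp add: dot_lmul_matrix inner_commute)
    also have "\<dots> = 0" using xy(3) by (simp add: matrix_vector_mult_diff_distrib)
    finally have "(x - y) \<bullet> (x - y) = 0" .
    then show "x = y" by simp
  qed
  then obtain g where "linear g" and g: "\<And>v. v \<in> col_range (transpose A) \<Longrightarrow> g (A *v v) = v"
    using linear_exists_left_inverse_on[OF matrix_vector_mul_linear subspace_col_range] by metis
  define G where "G = matrix g"
  have GA: "G ** A = Q"
  proof (subst matrix_eq, intro allI)
    fix x
    have "Q *v x \<in> col_range (transpose A)" using Q unfolding col_range_def by auto
    then show "G ** A *v x = Q *v x"
      using g \<open>linear g\<close> AQ by (metis G_def matrix_vector_mul(2) matrix_vector_mul_assoc)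
  qed
  have "A ** G ** A = A" using AQ GA by (simp flip: matrix_mul_assoc)
  then have AGR: "A ** G ** R = R"
    using inner_inverse_mult_eq_if_col_range_subset[of A G R] R by simp
  define X where "X = Q ** G ** R"
  have "A ** X = R" unfolding X_def using AQ AGR by (simp add: matrix_mul_assoc)
  moreover have "X ** A = Q" unfolding X_def using RA GA QQ by (metis matrix_mul_assoc)
  ultimately have "is_mp_inverse A X"
    unfolding is_mp_inverse_def using RA QQ Qsym Rsym X_def by (simp add: matrix_mul_assoc)
  then show ?thesis ..
qed

lemma is_mp_inverse_mp_inverse: "is_mp_inverse A (mp_inverse A)"
proof -
  have "\<exists>!X. is_mp_inverse A X" using is_mp_inverse_exists is_mp_inverse_unique by blast
  moreover have "mp_inverse A = (THE X. is_mp_inverse A X)"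
    unfolding mp_inverse_def is_mp_inverse_def ..
  ultimately show ?thesis by (simp add: theI')
qed

lemma mp_inverse_eqI: "is_mp_inverse A X \<Longrightarrow> mp_inverse A = X"
  using is_mp_inverse_unique is_mp_inverse_mp_inverse by blast

lemma mp_inverse_penrose_equations:
  shows "A ** mp_inverse A ** A = A"
    and "mp_inverse A ** A ** mp_inverse A = mp_inverse A"
    and "transpose (A ** mp_inverse A) = A ** mp_inverse A"
    and "transpose (mp_inverse A ** A) = mp_inverse A ** A"
  using is_mp_inverse_mp_inverse[of A] unfolding is_mp_inverse_def by auto

lemma mult_mp_inverse_idempotent: "A ** mp_inverse A ** (A ** mp_inverse A) = A ** mp_inverse A"
  by (simp add: matrix_mul_assoc mp_inverse_penrose_equations(1))

lemma mp_inverse_mult_idempotent: "mp_inverse A ** A ** (mp_inverse A ** A) = mp_inverse A ** A"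
  by (simp add: matrix_mul_assoc mp_inverse_penrose_equations(2))

lemma col_range_mult_mp_inverse: "col_range (A ** mp_inverse A) = col_range A"
  using col_range_mult_subset[of "A ** mp_inverse A" A] col_range_mult_subset[of A "mp_inverse A"]
  by (simp add: mp_inverse_penrose_equations(1))

lemma null_space_mp_inverse_mult: "null_space (mp_inverse A ** A) = null_space A"
proof -
  have "A ** (mp_inverse A ** A) = A" by (simp add: matrix_mul_assoc mp_inverse_penrose_equations(1))
  then have "A *v x = A *v ((mp_inverse A ** A) *v x)" for x
    by (simp add: matrix_vector_mul_assoc)
  moreover have "(mp_inverse A ** A) *v x = mp_inverse A *v (A *v x)" for x
    by (simp add: matrix_vector_mul_assoc)
  ultimately show ?thesis unfolding null_space_def by (metis matrix_vector_mult_0_right)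
qed

lemma mp_inverse_mult_transpose: "mp_inverse A ** A ** transpose A = transpose A"
proof -
  have "transpose A = transpose ((A ** mp_inverse A) ** A)" by (simp add: mp_inverse_penrose_equations(1))
  also have "\<dots> = transpose (mp_inverse A ** A) ** transpose A"
    by (simp only: matrix_transpose_mul matrix_mul_assoc)
  finally show ?thesis by (simp add: mp_inverse_penrose_equations(4))
qed

lemma sym_idempotent_eq_if_col_range_eq:
  fixes P Q :: "real^'n^'n"
  assumes "P ** P = P" "transpose P = P" "Q ** Q = Q" "transpose Q = Q"
    and "col_range P = col_range Q"
  shows "P = Q"
proof -
  have "Q ** P = P" using idempotent_mult_eq_if_col_range_subset[OF assms(3), of P] assms(5) by simp
  moreover have "P ** Q = Q" using idempotent_mult_eq_if_col_range_subset[OF assms(1), of Q] assms(5) by simp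
  ultimately show ?thesis by (metis assms(2,4) matrix_transpose_mul)
qed

lemma transpose_diff: "transpose (A - B) = transpose A - transpose B"
  by (simp add: transpose_def vec_eq_iff)

lemma col_range_complement_projector:
  assumes "P ** P = P"
  shows "col_range (mat 1 - P) = null_space P"
proof -
  have "P ** (mat 1 - P) = 0" using assms by (simp add: matrix_diff_ldistrib)
  then have "P *v ((mat 1 - P) *v x) = 0" for x by (simp add: matrix_vector_mul_assoc)
  moreover have "x = (mat 1 - P) *v x" if "P *v x = 0" for x
    using that by (simp add: matrix_vector_mult_diff_rdistrib)
  ultimately show ?thesis unfolding col_range_def null_space_def by auto
qed

lemma sym_idempotent_eq_if_null_space_eq:
  fixes P Q :: "real^'n^'n"
  assumes "P ** P = P" "transpose P = P" "Q ** Q = Q" "transpose Q = Q"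
    and "null_space P = null_space Q"
  shows "P = Q"
proof -
  have complement: "(mat 1 - R) ** (mat 1 - R) = mat 1 - R" "transpose (mat 1 - R) = mat 1 - R"
    if "R ** R = R" "transpose R = R" for R :: "real^'n^'n"
    using that by (simp_all add: matrix_diff_ldistrib matrix_diff_rdistrib transpose_diff)
  have "mat 1 - P = mat 1 - Q"
    using sym_idempotent_eq_if_col_range_eq[OF complement[OF assms(1,2)] complement[OF assms(3,4)]]
      col_range_complement_projector[OF assms(1)] col_range_complement_projector[OF assms(3)] assms(5)
    by simp
  then show ?thesis by simp
qed

lemma proper_splitting_mult_mp_inverse:
  assumes "proper_splitting A U V"
  shows "U ** mp_inverse U = A ** mp_inverse A"
proof (rule sym_idempotent_eq_if_col_range_eq)
  show "col_range (U ** mp_inverse U) = col_range (A ** mp_inverse A)"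
    using assms unfolding proper_splitting_def by (simp only: col_range_mult_mp_inverse)
qed (rule mult_mp_inverse_idempotent mp_inverse_penrose_equations(3))+

lemma proper_splitting_mp_inverse_mult:
  assumes "proper_splitting A U V"
  shows "mp_inverse U ** U = mp_inverse A ** A"
proof (rule sym_idempotent_eq_if_null_space_eq)
  show "null_space (mp_inverse U ** U) = null_space (mp_inverse A ** A)"
    using assms unfolding proper_splitting_def by (simp only: null_space_mp_inverse_mult)
qed (rule mp_inverse_mult_idempotent mp_inverse_penrose_equations(4))+

lemma nonneg_mat_mult: "nonneg_mat X \<Longrightarrow> nonneg_mat Y \<Longrightarrow> nonneg_mat (X ** Y)"
  unfolding nonneg_mat_def matrix_matrix_mult_def by (auto intro!: sum_nonneg)

lemma nonneg_mat_sum: "(\<And>k. k \<in> K \<Longrightarrow> nonneg_mat (f k)) \<Longrightarrow> nonneg_mat (\<Sum>k\<in>K. f k)"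
  unfolding nonneg_mat_def by (auto simp: sum_component intro!: sum_nonneg)

lemma vector_matrix_mult_mono:
  assumes "nonneg_mat M" and "x \<le> y"
  shows "x v* M \<le> y v* M"
  using assms unfolding nonneg_mat_def less_eq_vec_def vector_matrix_mult_def
  by (auto intro!: sum_mono mult_right_mono)

lemma nonneg_if_mult_I_minus_nonneg:
  fixes H :: "real^'n^'n"
  assumes H: "nonneg_mat H" and no_subinvariant: "\<And>z. 0 \<le> z \<Longrightarrow> z \<le> z v* H \<Longrightarrow> z = 0"
    and "0 \<le> x v* (mat 1 - H)"
  shows "0 \<le> x"
proof -
  define z where "z = (\<chi> l. max (- x $ l) 0)"
  have "0 \<le> z" and "- x \<le> z" unfolding z_def less_eq_vec_def by auto
  have "x v* H \<le> x" using assms(3) by (simp add: vector_matrix_mult_diff_rdistrib less_eq_vec_def)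
  have "z \<le> z v* H"
    unfolding less_eq_vec_def
  proof
    fix l
    have "0 \<le> (z v* H) $ l"
      using vector_matrix_mult_mono[OF H \<open>0 \<le> z\<close>] by (simp add: less_eq_vec_def)
    moreover have "- x $ l \<le> (z v* H) $ l"
    proof -
      have "- x $ l \<le> - (x v* H) $ l" using \<open>x v* H \<le> x\<close> by (simp add: less_eq_vec_def)
      also have "\<dots> = ((- x) v* H) $ l" by (simp add: vector_matrix_mult_def sum_negf)
      also have "\<dots> \<le> (z v* H) $ l"
        using vector_matrix_mult_mono[OF H \<open>- x \<le> z\<close>] by (simp add: less_eq_vec_def)
      finally show ?thesis .
    qed
    ultimately show "z $ l \<le> (z v* H) $ l" unfolding z_def by simp
  qed
  then have "z = 0" using no_subinvariant \<open>0 \<le> z\<close> by blast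
  then show ?thesis unfolding z_def by (auto simp: less_eq_vec_def vec_eq_iff max_def split: if_splits)
qed

lemma matrix_inv_mult:
  assumes "invertible A"
  shows "matrix_inv A ** A = mat 1" and "A ** matrix_inv A = mat 1"
  using someI_ex[OF assms[unfolded invertible_def]] unfolding matrix_inv_def by auto

lemma matrix_mult_row: "(A ** B) $ i = A $ i v* B"
  by (simp add: matrix_matrix_mult_def vector_matrix_mult_def vec_eq_iff mult.commute)

lemma I_minus_invertible_nonneg_inverse:
  fixes H :: "real^'n^'n"
  assumes H: "nonneg_mat H" and no_subinvariant: "\<And>z. 0 \<le> z \<Longrightarrow> z \<le> z v* H \<Longrightarrow> z = 0"
  shows "invertible (mat 1 - H)" and "nonneg_mat (matrix_inv (mat 1 - H))"
proof -
  have "x = 0" if "transpose (mat 1 - H) *v x = 0" for x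
  proof -
    have "x v* (mat 1 - H) = 0" using that by simp
    moreover have "(- x) v* (mat 1 - H) = 0"
      using vector_matrix_mult_diff_distrib[of 0 x "mat 1 - H"] that by simp
    ultimately have "0 \<le> x" "0 \<le> - x"
      using nonneg_if_mult_I_minus_nonneg[OF H no_subinvariant] by (metis order_refl)+
    then show ?thesis by (simp add: less_eq_vec_def vec_eq_iff order_antisym)
  qed
  then have "invertible (transpose (mat 1 - H))"
    by (simp add: invertible_left_inverse matrix_left_invertible_ker)
  then show inv: "invertible (mat 1 - H)" using transpose_invertible by fastforce
  show "nonneg_mat (matrix_inv (mat 1 - H))"
    unfolding nonneg_mat_def
  proof (intro allI)
    fix i j
    have "matrix_inv (mat 1 - H) $ i v* (mat 1 - H) = (mat 1 :: real^'n^'n) $ i"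
      using matrix_inv_mult(1)[OF inv] by (metis matrix_mult_row)
    moreover have "(0::real^'n) \<le> mat 1 $ i" by (simp add: less_eq_vec_def mat_def)
    ultimately have "0 \<le> matrix_inv (mat 1 - H) $ i"
      using nonneg_if_mult_I_minus_nonneg[OF H no_subinvariant] by simp
    then show "0 \<le> matrix_inv (mat 1 - H) $ i $ j" by (simp add: less_eq_vec_def)
  qed
qed

lemma col_range_mult_matrix_inv:
  assumes "invertible (K::real^'n^'n)"
  shows "col_range (A ** matrix_inv K) = col_range A"
proof
  show "col_range (A ** matrix_inv K) \<subseteq> col_range A" by (rule col_range_mult_subset)
  have "A = A ** matrix_inv K ** K" using matrix_inv_mult(1)[OF assms] by (simp flip: matrix_mul_assoc)
  then show "col_range A \<subseteq> col_range (A ** matrix_inv K)"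
    using col_range_mult_subset[of "A ** matrix_inv K" K] by simp
qed

lemma mp_inverse_mult_eq_if_col_range_subset:
  assumes "col_range M \<subseteq> col_range (transpose A)"
  shows "mp_inverse A ** A ** M = M"
proof (rule idempotent_mult_eq_if_col_range_subset[OF mp_inverse_mult_idempotent])
  have "col_range (transpose A) \<subseteq> col_range (mp_inverse A ** A)"
    using col_range_mult_subset[of "mp_inverse A ** A" "transpose A"] by (simp add: mp_inverse_mult_transpose)
  then show "col_range M \<subseteq> col_range (mp_inverse A ** A)" using assms by blast
qed

lemma I_minus_fixes_null_space:
  assumes "H ** (mp_inverse A ** A) = H" and "A *v x = 0"
  shows "(mat 1 - H) *v x = x"
proof -
  have "H *v x = H *v (mp_inverse A *v (A *v x))"
    using assms(1) by (simp add: matrix_vector_mul_assoc flip: matrix_mul_assoc)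
  then show ?thesis using assms(2) by (simp add: matrix_vector_mult_diff_rdistrib)
qed

lemma null_space_induced_splitting:
  assumes "H ** (mp_inverse A ** A) = H" and "invertible (mat 1 - H)"
  shows "null_space (A ** matrix_inv (mat 1 - H)) = null_space A"
proof -
  let ?G = "matrix_inv (mat 1 - H)"
  have G_fix: "?G *v x = x" if "A *v x = 0" for x
  proof -
    have "?G *v x = ?G *v ((mat 1 - H) *v x)" using I_minus_fixes_null_space[OF assms(1) that] by simp
    then show ?thesis using matrix_inv_mult(1)[OF assms(2)] by (simp add: matrix_vector_mul_assoc)
  qed
  have G_null: "A *v x = 0" if "A *v (?G *v x) = 0" for x
  proof -
    have "x = (mat 1 - H) *v (?G *v x)"
      using matrix_inv_mult(2)[OF assms(2)] by (simp add: matrix_vector_mul_assoc)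
    also have "\<dots> = ?G *v x" using I_minus_fixes_null_space[OF assms(1) that] .
    finally have "?G *v x = x" by (rule sym)
    then show ?thesis using that by simp
  qed
  have "(A ** ?G) *v x = 0 \<longleftrightarrow> A *v x = 0" for x
    using G_fix[of x] G_null[of x] by (auto simp flip: matrix_vector_mul_assoc)
  then show ?thesis unfolding null_space_def by simp
qed

lemma mp_inverse_induced_splitting:
  assumes HP: "H ** (mp_inverse A ** A) = H" and PH: "(mp_inverse A ** A) ** H = H"
    and inv: "invertible (mat 1 - H)"
  shows "mp_inverse (A ** matrix_inv (mat 1 - H)) = (mat 1 - H) ** mp_inverse A"
proof (rule mp_inverse_eqI)
  let ?A' = "mp_inverse A" and ?K = "mat 1 - H" and ?G = "matrix_inv (mat 1 - H)"
  have GK: "?G ** ?K = mat 1" and KG: "?K ** ?G = mat 1" using matrix_inv_mult[OF inv] by auto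
  have KP: "?K ** (?A' ** A) = (?A' ** A) ** ?K"
    using HP PH by (simp add: matrix_diff_ldistrib matrix_diff_rdistrib)
  have "A ** ?G ** (?K ** ?A') = A ** (?G ** ?K) ** ?A'" by (simp add: matrix_mul_assoc)
  then have left: "A ** ?G ** (?K ** ?A') = A ** ?A'" using GK by simp
  have "?K ** ?A' ** (A ** ?G) = (?K ** (?A' ** A)) ** ?G" by (simp add: matrix_mul_assoc)
  also have "\<dots> = ?A' ** A ** (?K ** ?G)" using KP by (simp add: matrix_mul_assoc)
  finally have right: "?K ** ?A' ** (A ** ?G) = ?A' ** A" using KG by simp
  have "A ** ?A' ** (A ** ?G) = A ** ?G"
    using mp_inverse_penrose_equations(1)[of A] by (simp add: matrix_mul_assoc)
  moreover have "?A' ** A ** (?K ** ?A') = ?K ** ?A'"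
  proof -
    have "?A' ** A ** (?K ** ?A') = ?K ** (?A' ** A ** ?A')" using KP by (simp add: matrix_mul_assoc)
    then show ?thesis by (simp add: mp_inverse_penrose_equations(2))
  qed
  ultimately show "is_mp_inverse (A ** ?G) (?K ** ?A')"
    unfolding is_mp_inverse_def left right by (simp add: mp_inverse_penrose_equations(3,4))
qed

definition multisplitting_M ::
  "nat \<Rightarrow> (nat \<Rightarrow> real^'n^'m) \<Rightarrow> (nat \<Rightarrow> real^'n^'n) \<Rightarrow> real^'m^'n" where
  "multisplitting_M p U E = (\<Sum>k<p. E k ** mp_inverse (U k))"

lemma multisplitting_H_eq:
  assumes "proper_weak_regular_multisplitting A p U V E"
  shows "multisplitting_H p U V E = mp_inverse A ** A - multisplitting_M p U E ** A"
proof -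
  have split: "proper_splitting A (U k) (V k)" if "k < p" for k
    using assms that unfolding proper_weak_regular_multisplitting_def proper_weak_regular_splitting_def
    by blast
  have "E k ** mp_inverse (U k) ** V k = E k ** (mp_inverse A ** A) - E k ** mp_inverse (U k) ** A"
    if "k < p" for k
  proof -
    have "V k = U k - A" using split[OF that] unfolding proper_splitting_def by simp
    then have "mp_inverse (U k) ** V k = mp_inverse A ** A - mp_inverse (U k) ** A"
      using proper_splitting_mp_inverse_mult[OF split[OF that]] by (simp add: matrix_diff_ldistrib)
    then show ?thesis by (simp add: matrix_diff_ldistrib flip: matrix_mul_assoc)
  qed
  then have "multisplitting_H p U V E
      = (\<Sum>k<p. E k) ** (mp_inverse A ** A) - multisplitting_M p U E ** A"
    unfolding multisplitting_H_def multisplitting_M_def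
    by (simp add: sum_subtractf sum_matrix_mult)
  then show ?thesis using assms unfolding proper_weak_regular_multisplitting_def by simp
qed

lemma I_minus_multisplitting_H_mult_mp_inverse:
  assumes "proper_weak_regular_multisplitting A p U V E"
  shows "(mat 1 - multisplitting_H p U V E) ** mp_inverse A = multisplitting_M p U E"
proof -
  have "E k ** mp_inverse (U k) ** (A ** mp_inverse A) = E k ** mp_inverse (U k)" if "k < p" for k
  proof -
    have "proper_splitting A (U k) (V k)"
      using assms that unfolding proper_weak_regular_multisplitting_def proper_weak_regular_splitting_def
      by blast
    then have "mp_inverse (U k) ** (A ** mp_inverse A) = mp_inverse (U k)"
      using mp_inverse_penrose_equations(2)[of "U k"]
      by (simp add: matrix_mul_assoc flip: proper_splitting_mult_mp_inverse)
    then show ?thesis by (simp flip: matrix_mul_assoc)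
  qed
  then have "multisplitting_M p U E ** (A ** mp_inverse A) = multisplitting_M p U E"
    unfolding multisplitting_M_def by (simp add: sum_matrix_mult)
  moreover have "mp_inverse A ** (A ** mp_inverse A) = mp_inverse A"
    by (simp add: matrix_mul_assoc mp_inverse_penrose_equations(2))
  ultimately show ?thesis
    unfolding multisplitting_H_eq[OF assms]
    by (simp add: matrix_diff_ldistrib matrix_diff_rdistrib flip: matrix_mul_assoc)
qed

lemma multisplitting_H_mult_projection:
  assumes "proper_weak_regular_multisplitting A p U V E"
  shows "multisplitting_H p U V E ** (mp_inverse A ** A) = multisplitting_H p U V E"
proof -
  have "A ** (mp_inverse A ** A) = A" by (simp add: matrix_mul_assoc mp_inverse_penrose_equations(1))
  then show ?thesis
    unfolding multisplitting_H_eq[OF assms] by (simp add: matrix_diff_rdistrib flip: matrix_mul_assoc)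
qed

lemma projection_mult_multisplitting_H:
  assumes "proper_weak_regular_multisplitting A p U V E"
    and "\<forall>k<p. col_range (E k) \<subseteq> col_range (transpose A)"
  shows "mp_inverse A ** A ** multisplitting_H p U V E = multisplitting_H p U V E"
proof -
  have "mp_inverse A ** A ** E k = E k" if "k < p" for k
    using assms(2) that mp_inverse_mult_eq_if_col_range_subset by blast
  then have "mp_inverse A ** A ** multisplitting_M p U E = multisplitting_M p U E"
    unfolding multisplitting_M_def by (simp add: matrix_mult_sum matrix_mul_assoc)
  then show ?thesis
    unfolding multisplitting_H_eq[OF assms(1)]
    by (simp add: matrix_diff_ldistrib mp_inverse_penrose_equations(2) matrix_mul_assoc)
qed

lemma nonneg_multisplitting_H:
  assumes "proper_weak_regular_multisplitting A p U V E"
  shows "nonneg_mat (multisplitting_H p U V E)"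
  unfolding multisplitting_H_def
proof (rule nonneg_mat_sum)
  fix k assume "k \<in> {..<p}"
  then have "nonneg_mat (E k)" "nonneg_mat (mp_inverse (U k) ** V k)"
    using assms unfolding proper_weak_regular_multisplitting_def proper_weak_regular_splitting_def by auto
  then show "nonneg_mat (E k ** mp_inverse (U k) ** V k)"
    unfolding matrix_mul_assoc[symmetric] by (rule nonneg_mat_mult)
qed

lemma nonneg_multisplitting_M:
  assumes "proper_weak_regular_multisplitting A p U V E"
  shows "nonneg_mat (multisplitting_M p U E)"
  using assms
  unfolding multisplitting_M_def proper_weak_regular_multisplitting_def proper_weak_regular_splitting_def
  by (auto intro!: nonneg_mat_sum nonneg_mat_mult)

lemma transpose_diagonal_mat: "diagonal_mat E \<Longrightarrow> transpose E = E"
  unfolding diagonal_mat_def transpose_def by (simp add: vec_eq_iff) metis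

lemma proper_splitting_row_space_eq_0:
  assumes "proper_splitting A U V" and "u \<in> col_range (transpose A)" and "u v* mp_inverse U = 0"
  shows "u = 0"
proof -
  obtain w where w: "u = transpose A *v w" using assms(2) unfolding col_range_def by auto
  have "u = (mp_inverse A ** A) *v u"
    unfolding w by (simp only: matrix_vector_mul_assoc mp_inverse_mult_transpose)
  also have "\<dots> = transpose (mp_inverse U ** U) *v u"
    by (simp only: proper_splitting_mp_inverse_mult[OF assms(1)] mp_inverse_penrose_equations(4))
  also have "\<dots> = (u v* mp_inverse U) v* U" by (simp add: vector_matrix_mul_assoc)
  finally show ?thesis using assms(3) by simp
qed

lemma multisplitting_H_subinvariant_eq_0:
  assumes semimono: "nonneg_mat (mp_inverse A)" and multi: "proper_weak_regular_multisplitting A p U V E"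
    and rangeE: "\<forall>k<p. col_range (E k) \<subseteq> col_range (transpose A)"
    and "0 \<le> z" and "z \<le> z v* multisplitting_H p U V E"
  shows "z = 0"
proof -
  let ?H = "multisplitting_H p U V E" and ?term = "\<lambda>k. z v* (E k ** mp_inverse (U k))"
  have parts: "proper_splitting A (U k) (V k)" "nonneg_mat (E k)" "diagonal_mat (E k)"
    "nonneg_mat (mp_inverse (U k))" if "k < p" for k
    using multi that unfolding proper_weak_regular_multisplitting_def proper_weak_regular_splitting_def
    by blast+
  have sum_E: "(\<Sum>k<p. E k) = mat 1"
    using multi unfolding proper_weak_regular_multisplitting_def by blast
  have "(\<Sum>k<p. ?term k) = (z v* (mat 1 - ?H)) v* mp_inverse A"
    by (simp add: vector_matrix_mul_assoc I_minus_multisplitting_H_mult_mp_inverse[OF multi]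
        multisplitting_M_def vector_matrix_mult_sum)
  also have "\<dots> \<le> 0 v* mp_inverse A"
  proof (rule vector_matrix_mult_mono[OF semimono])
    show "z v* (mat 1 - ?H) \<le> 0"
      using assms(5) by (simp add: vector_matrix_mult_diff_rdistrib less_eq_vec_def)
  qed
  finally have sum_le: "(\<Sum>k<p. ?term k) \<le> 0" by simp
  have nonneg_terms: "0 \<le> ?term k" if "k < p" for k
    using vector_matrix_mult_mono[OF nonneg_mat_mult[OF parts(2,4)[OF that]] \<open>0 \<le> z\<close>] by simp
  then have "0 \<le> (\<Sum>k<p. ?term k)" by (intro sum_nonneg) simp
  with sum_le have "(\<Sum>k<p. ?term k) = 0" by (rule order_antisym)
  then have terms_0: "\<forall>k\<in>{..<p}. ?term k = 0"
    using nonneg_terms by (subst (asm) sum_nonneg_eq_0_iff) auto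
  have "E k *v z = 0" if "k < p" for k
  proof (rule proper_splitting_row_space_eq_0[OF parts(1)[OF that]])
    show "E k *v z \<in> col_range (transpose A)" using rangeE that unfolding col_range_def by blast
    have "transpose (E k) = E k" using transpose_diagonal_mat[OF parts(3)[OF that]] .
    then have "E k *v z = z v* E k" by (metis transpose_matrix_vector)
    then show "(E k *v z) v* mp_inverse (U k) = 0"
      using terms_0 that by (simp add: vector_matrix_mul_assoc)
  qed
  then have "(\<Sum>k<p. E k) *v z = 0" by (simp add: sum_matrix_vector_mult)
  then show ?thesis using sum_E by simp
qed

theorem theorem5p7:
  fixes A :: "real^'n^'m" and p :: nat
    and U V :: "nat \<Rightarrow> real^'n^'m" and E :: "nat \<Rightarrow> real^'n^'n"
    and H :: "real^'n^'n" and B C :: "real^'n^'m"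
  assumes semimono: "nonneg_mat (mp_inverse A)"
    and multi: "proper_weak_regular_multisplitting A p U V E"
    and H_def: "H = multisplitting_H p U V E"
    and B_def: "B = A ** matrix_inv (mat 1 - H)"
    and C_def: "C = B - A"
    and A_nonneg: "nonneg_mat A"
    and rangeE: "\<forall>k<p. col_range (E k) \<subseteq> col_range (transpose A)"
  shows "proper_regular_splitting A B C"
proof -
  have H_nonneg: "nonneg_mat H" using nonneg_multisplitting_H[OF multi] H_def by simp
  have no_subinvariant: "\<And>z. 0 \<le> z \<Longrightarrow> z \<le> z v* H \<Longrightarrow> z = 0"
    using multisplitting_H_subinvariant_eq_0[OF semimono multi rangeE] H_def by blast
  note I_minus_H = I_minus_invertible_nonneg_inverse[OF H_nonneg no_subinvariant]
  have HP: "H ** (mp_inverse A ** A) = H" and PH: "mp_inverse A ** A ** H = H"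
    using multisplitting_H_mult_projection[OF multi] projection_mult_multisplitting_H[OF multi rangeE] H_def
    by simp_all
  have B_nonneg: "nonneg_mat B" unfolding B_def using A_nonneg I_minus_H(2) by (rule nonneg_mat_mult)
  have "A = B ** (mat 1 - H)"
    unfolding B_def using matrix_inv_mult(1)[OF I_minus_H(1)] by (simp flip: matrix_mul_assoc)
  then have "C = B ** H" unfolding C_def by (simp add: matrix_diff_ldistrib)
  then have C_nonneg: "nonneg_mat C" using B_nonneg H_nonneg by (simp add: nonneg_mat_mult)
  have "mp_inverse B = multisplitting_M p U E"
    using mp_inverse_induced_splitting[OF HP PH I_minus_H(1)] I_minus_multisplitting_H_mult_mp_inverse[OF multi]
    unfolding B_def H_def by simp
  then have "nonneg_mat (mp_inverse B)" using nonneg_multisplitting_M[OF multi] by simp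
  then show ?thesis
    unfolding proper_regular_splitting_def proper_splitting_def
    using C_def B_def col_range_mult_matrix_inv[OF I_minus_H(1)] null_space_induced_splitting[OF HP I_minus_H(1)]
      B_nonneg C_nonneg by simp
qed

end
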